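(* Let $R$ be a finite set of $n$ robots, with coordination space $\chi=\mathbb{R}^n$, obstacle region, dynamics, brake-safe set $B_G$ and control law $g^G$ as described in the context, and let $G$ be an acyclic directed graph on vertex set $R$. For each $i\in R$ let $\bar x_i:=\sup\{x_i: x\in\chi^{\mathrm{obs}}_{ij}\text{ for some } j\ne i\}$ (with $\bar x_i=-\infty$ if this set is empty). Then for every initial condition $s\in B_G$ there exists $T>0$ such that for all $i\in R$, $$\pi_{x,i}(\Phi(T,s,g^G))>\bar x_i.$$
   Context: Robots $i\in R$ move along fixed paths; $x_i\in\mathbb{R}$ is the curvilinear coordinate of robot $i$, $x=(x_i)_{i\in R}\in\chi:=\mathbb{R}^n$, and $\{\mathbf e_i\}$ is the canonical basis of $\chi$. For each unordered pair $\{i,j\}$, $\chi^{\mathrm{obs}}_{ij}\subset\chi$ (configurations where $i$ and $j$ collide) is an open cylinder of the form $C_{ij}+\mathrm{span}\{\mathbf e_k:k\ne i,j\}$ where $C_{ij}$ is an open bounded convex subset of $\mathrm{span}\{\mathbf e_i,\mathbf e_j\}$ (possibly empty); $\chi^{\mathrm{obs}}=\bigcup_{\{i,j\}}\chi^{\mathrm{obs}}_{ij}$. For $i\neq j$ define $\chi^{\mathrm{obs}}_{i\succ j}:=\chi^{\mathrm{obs}}_{ij}-\mathbb{R}_+\mathbf e_i+\mathbb{R}_+\mathbf e_j$ (Minkowski sum). A priority graph is a directed graph $G$ with vertex set $R$ and edge set $E(G)$; an edge $(i,j)$ means $i$ has priority over $j$. Set $\chi^{\mathrm{obs}}_G:=\bigcup_{(i,j)\in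 E(G)}\chi^{\mathrm{obs}}_{i\succ j}$, $\chi^{\mathrm{free}}_G:=\chi\setminus\chi^{\mathrm{obs}}_G$. Dynamics: robot $i$ has state $s_i=(x_i,v_i)\in S_i:=\mathbb{R}\times[0,\overline v_i]$ with speed limit $\overline v_i>0$, and $\dot x_i=v_i$, $\dot v_i=\mathbf u_i(t)\,\delta(\mathbf u_i(t),v_i(t))$, where $\delta(u,v)=0$ if ($v=0$ and $u<0$) or ($v=\overline v_i$ and $u>0$), and $\delta=1$ otherwise. Controls take values in $U_i=[\underline u_i,\overline u_i]$ with $\underline u_i<0<\overline u_i$ and are piecewise constant on each slot $[k,k+1)$, $k\in\mathbb{N}$; $\mathbf U_i$ is the set of such controls, $\mathbf U=\prod_i\mathbf U_i$, $S=\prod_i S_i$, $U=\prod_i U_i$. $\Phi_i(t,s_i,\mathbf u_i)$ is the resulting flow of robot $i$ from $s_i$, and $\Phi(t,s,\mathbf u)=(\Phi_i(t,s_i,\mathbf u_i))_i$. $\underline{\mathbf u}$ denotes the constant control equal to $(\underline u_i)_i$. $\pi_x(s)=x$, $\pi_{x,i}(s)=x_i$. Brake-safe states: $B_G:=\{s\in S:\ \pi_x(\Phi(t,s,\underline{\mathbf u}))\in\chi^{\mathrm{free}}_G\ \forall t\ge0\}$. Impulse control: $\mathbf u_i^{\mathrm{impulse}}(t)=\overline u_i$ for $t\in[0,1)$ and $=\underline u_i$ for $t\ge1$. Worst-case control w.r.t. $i$: $\tilde{\mathbf u}^i$ with $\tilde{\mathbf u}^i_i=\mathbf u_i^{\mathrm{impulse}}$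 and $\tilde{\mathbf u}^i_j$ the constant control $\underline u_j$ for $j\ne i$. Control law $g^G:S\to U$: $g^G_i(s)=\underline u_i$ if there exists $(j,i)\in E(G)$ and $t\ge0$ with $\pi_x(\Phi(t,s,\tilde{\mathbf u}^i))\in\chi^{\mathrm{obs}}_{j\succ i}$; otherwise $g^G_i(s)=\overline u_i$. For a feedback law $h:S\to U$, $\Phi(t,s,h)$ denotes $\Phi(t,s,\mathbf u)$ where $\mathbf u\in\mathbf U$ satisfies $\mathbf u(k)=h(\Phi(k,s,\mathbf u))$ for all $k\in\mathbb{N}$. *)

theory Defs
  imports "HOL-Analysis.Analysis"
begin

text \<open>Robots are indexed by a finite type 'r; a configuration is a map 'r \<Rightarrow> real
  (the coordination space R^n, n = CARD('r)). The state of robot i is (x_i, v_i).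
  Controls are sampled: u :: nat \<Rightarrow> 'r \<Rightarrow> real, u k i is the (constant) control of
  robot i on the slot [k, k+1).\<close>

type_synonym 'r config = "'r \<Rightarrow> real"
type_synonym 'r jstate = "'r \<Rightarrow> real \<times> real"
type_synonym 'r control = "nat \<Rightarrow> 'r \<Rightarrow> real"

definition unit_vec :: "'r \<Rightarrow> 'r config" where
  "unit_vec i = (\<lambda>k. if k = i then 1 else 0)"

text \<open>Collision region of the pair {i,j}: cylinder over C i j \<subseteq> span{e_i,e_j},
  identified with a subset of real \<times> real via the coordinates (x_i, x_j).\<close>
definition obs_pair :: "('r \<Rightarrow> 'r \<Rightarrow> (real \<times> real) set) \<Rightarrow> 'r \<Rightarrow> 'r \<Rightarrow> 'r config set" where
  "obs_pair C i j = {x. (x i, x j) \<in> C i j}"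

definition obs_prio :: "('r \<Rightarrow> 'r \<Rightarrow> (real \<times> real) set) \<Rightarrow> 'r \<Rightarrow> 'r \<Rightarrow> 'r config set" where
  "obs_prio C i j = {y. \<exists>x \<in> obs_pair C i j. \<exists>a \<ge> 0. \<exists>b \<ge> 0.
        y = (\<lambda>k. x k - a * unit_vec i k + b * unit_vec j k)}"

definition obs_G :: "('r \<Rightarrow> 'r \<Rightarrow> (real \<times> real) set) \<Rightarrow> ('r \<times> 'r) set \<Rightarrow> 'r config set" where
  "obs_G C E = (\<Union>(i, j) \<in> E. obs_prio C i j)"

definition free_G :: "('r \<Rightarrow> 'r \<Rightarrow> (real \<times> real) set) \<Rightarrow> ('r \<times> 'r) set \<Rightarrow> 'r config set" where
  "free_G C E = UNIV - obs_G C E"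

text \<open>Single-robot dynamics under a constant control u during a slot:
  dv/dt = u * delta(u,v) with v saturated in [0, vmax], dx/dt = v.
  Solution for v0 \<in> [0, vmax]: v(tau) = min vmax (max 0 (v0 + u tau)).\<close>
definition vel :: "real \<Rightarrow> real \<Rightarrow> real \<Rightarrow> real \<Rightarrow> real" where
  "vel vm v u \<tau> = min vm (max 0 (v + u * \<tau>))"

definition slot_flow :: "real \<Rightarrow> real \<Rightarrow> real \<Rightarrow> real \<times> real \<Rightarrow> real \<times> real" where
  "slot_flow vm u \<tau> s = (fst s + integral {0..\<tau>} (\<lambda>\<sigma>. vel vm (snd s) u \<sigma>), vel vm (snd s) u \<tau>)"

fun slot_states :: "real \<Rightarrow> (nat \<Rightarrow> real) \<Rightarrow> real \<times> real \<Rightarrow> nat \<Rightarrow> real \<times> real" where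
  "slot_states vm u s 0 = s"
| "slot_states vm u s (Suc k) = slot_flow vm (u k) 1 (slot_states vm u s k)"

definition robot_flow :: "real \<Rightarrow> real \<Rightarrow> real \<times> real \<Rightarrow> (nat \<Rightarrow> real) \<Rightarrow> real \<times> real" where
  "robot_flow vm t s u = slot_flow vm (u (nat \<lfloor>t\<rfloor>)) (t - of_int \<lfloor>t\<rfloor>) (slot_states vm u s (nat \<lfloor>t\<rfloor>))"

definition flow :: "('r \<Rightarrow> real) \<Rightarrow> real \<Rightarrow> 'r jstate \<Rightarrow> 'r control \<Rightarrow> 'r jstate" where
  "flow vm t s u = (\<lambda>i. robot_flow (vm i) t (s i) (\<lambda>k. u k i))"

definition posn :: "'r jstate \<Rightarrow> 'r config" where
  "posn s = (\<lambda>i. fst (s i))"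

definition state_space :: "('r \<Rightarrow> real) \<Rightarrow> 'r jstate set" where
  "state_space vm = {s. \<forall>i. 0 \<le> snd (s i) \<and> snd (s i) \<le> vm i}"

definition brake_safe :: "('r \<Rightarrow> real) \<Rightarrow> ('r \<Rightarrow> real) \<Rightarrow> ('r \<Rightarrow> 'r \<Rightarrow> (real \<times> real) set)
    \<Rightarrow> ('r \<times> 'r) set \<Rightarrow> 'r jstate set" where
  "brake_safe vm ulow C E = {s \<in> state_space vm.
      \<forall>t \<ge> 0. posn (flow vm t s (\<lambda>k. ulow)) \<in> free_G C E}"

definition worst_ctrl :: "('r \<Rightarrow> real) \<Rightarrow> ('r \<Rightarrow> real) \<Rightarrow> 'r \<Rightarrow> 'r control" where
  "worst_ctrl ulow uhigh i = (\<lambda>k j. if j = i then (if k = 0 then uhigh i else ulow i) else ulow j)"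

definition ctrl_law :: "('r \<Rightarrow> real) \<Rightarrow> ('r \<Rightarrow> real) \<Rightarrow> ('r \<Rightarrow> real) \<Rightarrow> ('r \<Rightarrow> 'r \<Rightarrow> (real \<times> real) set)
    \<Rightarrow> ('r \<times> 'r) set \<Rightarrow> 'r jstate \<Rightarrow> 'r \<Rightarrow> real" where
  "ctrl_law vm ulow uhigh C E s = (\<lambda>i.
      if \<exists>j. (j, i) \<in> E \<and> (\<exists>t \<ge> 0. posn (flow vm t s (worst_ctrl ulow uhigh i)) \<in> obs_prio C j i)
      then ulow i else uhigh i)"

text \<open>Closed loop under a feedback law h: states at the sampling instants and the
  induced control u with u k = h (Phi(k, s, u)).\<close>
fun fb_states :: "('r \<Rightarrow> real) \<Rightarrow> ('r jstate \<Rightarrow> 'r \<Rightarrow> real) \<Rightarrow> 'r jstate \<Rightarrow> nat \<Rightarrow> 'r jstate" where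
  "fb_states vm h s 0 = s"
| "fb_states vm h s (Suc k) =
     (\<lambda>i. slot_flow (vm i) (h (fb_states vm h s k) i) 1 (fb_states vm h s k i))"

definition fb_ctrl :: "('r \<Rightarrow> real) \<Rightarrow> ('r jstate \<Rightarrow> 'r \<Rightarrow> real) \<Rightarrow> 'r jstate \<Rightarrow> 'r control" where
  "fb_ctrl vm h s = (\<lambda>k. h (fb_states vm h s k))"

definition fb_flow :: "('r \<Rightarrow> real) \<Rightarrow> real \<Rightarrow> 'r jstate \<Rightarrow> ('r jstate \<Rightarrow> 'r \<Rightarrow> real) \<Rightarrow> 'r jstate" where
  "fb_flow vm t s h = flow vm t s (fb_ctrl vm h s)"

definition xbar :: "('r \<Rightarrow> 'r \<Rightarrow> (real \<times> real) set) \<Rightarrow> 'r \<Rightarrow> ereal" where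
  "xbar C i = Sup {ereal (x i) | x j. j \<noteq> i \<and> x \<in> obs_pair C i j}"

end

theory Submission
  imports Defs
begin

text \<open>Robots never move backwards and the sets C i j are bounded, so each \<open>xbar C i\<close> is finite
  and a robot that has passed it has passed it for good. Once every robot with priority over i
  has passed its \<open>xbar\<close>, no worst-case trajectory can enter an obstacle \<open>obs_prio C j i\<close>,
  whose j-coordinates lie below \<open>xbar C j\<close>; from then on g^G accelerates robot i, whose speed
  stays bounded away from 0, so it travels arbitrarily far. Induction along the well-founded
  priority relation gives this for all robots.\<close>

lemma vel_nonneg: "vm \<ge> 0 \<Longrightarrow> vel vm v u \<tau> \<ge> 0"
  by (simp add: vel_def)

lemma vel_integrable: "vel vm v u integrable_on {a..b}"
proof -
  have "continuous_on {a..b} (\<lambda>\<sigma>. min vm (max 0 (v + u * \<sigma>)))"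
    by (intro continuous_intros)
  then show ?thesis
    unfolding vel_def[abs_def] by (rule integrable_continuous_interval)
qed

lemma integral_vel_nonneg: "vm \<ge> 0 \<Longrightarrow> integral {0..\<tau>} (vel vm v u) \<ge> 0"
  by (rule integral_nonneg[OF vel_integrable]) (simp add: vel_nonneg)

lemma integral_vel_ge:
  assumes "c \<le> vm" "c \<le> v" "u \<ge> 0"
  shows "c \<le> integral {0..1} (vel vm v u)"
proof -
  have "vel vm v u \<sigma> \<ge> c" if "\<sigma> \<in> {0..1}" for \<sigma>
  proof -
    have "v \<le> v + u * \<sigma>" using assms that by simp
    then show ?thesis using assms by (simp add: vel_def)
  qed
  then have "integral {0..1::real} (\<lambda>\<sigma>. c) \<le> integral {0..1} (vel vm v u)"
    by (intro integral_le vel_integrable) auto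
  then show ?thesis by simp
qed

lemma slot_flow_fst_ge: "vm \<ge> 0 \<Longrightarrow> fst s \<le> fst (slot_flow vm u \<tau> s)"
  by (simp add: slot_flow_def integral_vel_nonneg)

lemma slot_states_fst_ge: "vm \<ge> 0 \<Longrightarrow> fst s \<le> fst (slot_states vm u s k)"
  by (induction k) (auto intro: order_trans slot_flow_fst_ge)

lemma robot_flow_fst_ge: "vm \<ge> 0 \<Longrightarrow> fst s \<le> fst (robot_flow vm t s u)"
  unfolding robot_flow_def by (meson order_trans slot_flow_fst_ge slot_states_fst_ge)

lemma slot_states_snd_nonneg: "vm \<ge> 0 \<Longrightarrow> snd s \<ge> 0 \<Longrightarrow> snd (slot_states vm u s k) \<ge> 0"
  by (cases k) (simp_all add: slot_flow_def vel_nonneg)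

lemma slot_states_fst_at_top:
  assumes vm: "vm > 0" and uh: "uh > 0" and v0: "snd s \<ge> 0"
    and u: "\<forall>\<^sub>F k in sequentially. u k = uh"
  shows "filterlim (\<lambda>k. fst (slot_states vm u s k)) at_top sequentially"
proof -
  let ?p = "\<lambda>k. fst (slot_states vm u s k)" and ?v = "\<lambda>k. snd (slot_states vm u s k)"
  define c where "c = min vm uh"
  have c: "c > 0" "c \<le> vm" using vm uh by (auto simp: c_def)
  obtain K where K: "\<And>k. k \<ge> K \<Longrightarrow> u k = uh"
    using u by (auto simp: eventually_sequentially)
  have incr: "incseq ?p"
    by (rule incseq_SucI) (use vm in \<open>simp add: slot_flow_fst_ge\<close>)
  have speed: "c \<le> ?v (Suc k)" if "k \<ge> K" for k
    using K[OF that] slot_states_snd_nonneg[OF _ v0, of vm u k] vm uh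
    by (auto simp: slot_flow_def vel_def c_def)
  have step: "?p k + c \<le> ?p (Suc k)" if "k > K" for k
  proof -
    obtain m where m: "k = Suc m" "m \<ge> K" using \<open>k > K\<close> by (cases k) auto
    have "c \<le> integral {0..1} (vel vm (?v k) (u k))"
      using integral_vel_ge[OF c(2) speed[OF m(2)]] K m uh by simp
    then show ?thesis by (simp add: slot_flow_def)
  qed
  have linear: "?p (Suc K) + real m * c \<le> ?p (Suc K + m)" for m
  proof (induction m)
    case (Suc m)
    then show ?case using step[of "Suc K + m"] by (simp add: distrib_right)
  qed simp
  show ?thesis
    unfolding filterlim_at_top
  proof
    fix Z
    obtain m where m: "Z - ?p (Suc K) < real m * c"
      using reals_Archimedean3[OF c(1)] by blast
    have "Z \<le> ?p k" if "k \<ge> Suc K + m" for k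
      using linear[of m] m monoD[OF incr that] by linarith
    then show "\<forall>\<^sub>F k in sequentially. Z \<le> ?p k"
      by (auto simp: eventually_sequentially)
  qed
qed

lemma eventually_ereal_less_at_top:
  assumes "filterlim f at_top F" "a < \<infinity>"
  shows "\<forall>\<^sub>F x in F. a < ereal (f x)"
  using assms by (cases a) (auto simp: filterlim_at_top_dense)

lemma xbar_upper: "j \<noteq> i \<Longrightarrow> x \<in> obs_pair C i j \<Longrightarrow> ereal (x i) \<le> xbar C i"
  unfolding xbar_def by (rule Sup_upper, rule CollectI, intro exI[of _ x] exI[of _ j]) simp

lemma xbar_less_PInf:
  fixes C :: "'r::finite \<Rightarrow> 'r \<Rightarrow> (real \<times> real) set"
  assumes "\<forall>j. j \<noteq> i \<longrightarrow> bounded (C i j)"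
  shows "xbar C i < \<infinity>"
proof -
  have "bounded (\<Union>j\<in>{j. j \<noteq> i}. fst ` C i j)"
    using assms by (auto intro!: bounded_UN bounded_fst)
  then obtain B where B: "\<And>j z. j \<noteq> i \<Longrightarrow> z \<in> C i j \<Longrightarrow> \<bar>fst z\<bar> \<le> B"
    unfolding bounded_real by blast
  have "xbar C i \<le> ereal B"
    unfolding xbar_def obs_pair_def
    by (rule Sup_least) (force dest: B)
  then show ?thesis
    by (cases "xbar C i") auto
qed

text \<open>\<open>obs_prio C j i\<close> extends \<open>obs_pair C j i\<close> only backwards in the coordinate of j.\<close>
lemma flow_notin_obs_prio:
  assumes vm: "\<forall>k. vm k \<ge> 0" and ji: "j \<noteq> i" and passed: "xbar C j < ereal (fst (s j))"
  shows "posn (flow vm t s u) \<notin> obs_prio C j i"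
proof
  assume "posn (flow vm t s u) \<in> obs_prio C j i"
  then obtain x a b where x: "x \<in> obs_pair C j i" and a: "a \<ge> 0"
    and y: "posn (flow vm t s u) = (\<lambda>k. x k - a * unit_vec j k + b * unit_vec i k)"
    unfolding obs_prio_def by blast
  have "fst (s j) \<le> posn (flow vm t s u) j"
    unfolding posn_def flow_def using vm robot_flow_fst_ge by blast
  also have "\<dots> \<le> x j"
    using y ji a by (simp add: unit_vec_def)
  finally have "ereal (fst (s j)) \<le> xbar C j"
    using xbar_upper[OF not_sym[OF ji] x] by (meson ereal_less_eq(3) order_trans)
  with passed show False by simp
qed

lemma ctrl_law_eq_uhigh:
  assumes vm: "\<forall>k. vm k \<ge> 0" and "(i, i) \<notin> E"
    and passed: "\<forall>j. (j, i) \<in> E \<longrightarrow> xbar C j < ereal (fst (s j))"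
  shows "ctrl_law vm ulow uhigh C E s i = uhigh i"
proof -
  have "j \<noteq> i" if "(j, i) \<in> E" for j
    using that assms(2) by auto
  then show ?thesis
    unfolding ctrl_law_def using flow_notin_obs_prio[OF vm] passed by auto
qed

lemma fb_states_eq_slot_states:
  "fb_states vm h s k i = slot_states (vm i) (\<lambda>k. h (fb_states vm h s k) i) (s i) k"
  by (induction k) auto

lemma posn_fb_flow_of_nat: "posn (fb_flow vm (real k) s h) i = fst (fb_states vm h s k i)"
  unfolding posn_def fb_flow_def flow_def robot_flow_def fb_ctrl_def
  by (simp add: slot_flow_def fb_states_eq_slot_states)

lemma fb_states_pass_xbar:
  fixes vm uhigh :: "'r::finite \<Rightarrow> real"
  assumes vm_pos: "\<forall>i. vm i > 0" and uhigh_pos: "\<forall>i. uhigh i > 0"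
    and C_bounded: "\<forall>i j. i \<noteq> j \<longrightarrow> bounded (C i j)"
    and acyclic: "acyclic E" and s: "s \<in> state_space vm"
  shows "\<forall>\<^sub>F k in sequentially.
           xbar C i < ereal (fst (fb_states vm (ctrl_law vm ulow uhigh C E) s k i))"
proof -
  let ?h = "ctrl_law vm ulow uhigh C E"
  let ?P = "fb_states vm ?h s"
  have vm_nonneg: "\<forall>i. vm i \<ge> 0"
    using vm_pos by (simp add: less_imp_le)
  have loop_free: "(i, i) \<notin> E" for i
    using acyclic by (auto simp: acyclic_def)
  have "wf E"
    using acyclic by (intro finite_acyclic_wf) simp_all
  then show ?thesis
  proof (induction i rule: wf_induct_rule)
    case (less i)
    then have "\<forall>\<^sub>F k in sequentially. \<forall>j. (j, i) \<in> E \<longrightarrow> xbar C j < ereal (fst (?P k j))"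
      by (intro eventually_all_finite) (auto intro: eventually_mono)
    then have "\<forall>\<^sub>F k in sequentially. ?h (?P k) i = uhigh i"
      by eventually_elim (rule ctrl_law_eq_uhigh[OF vm_nonneg loop_free])
    then have "filterlim (\<lambda>k. fst (slot_states (vm i) (\<lambda>k. ?h (?P k) i) (s i) k)) at_top sequentially"
      using vm_pos uhigh_pos s
      by (intro slot_states_fst_at_top[where uh = "uhigh i"]) (simp_all add: state_space_def)
    then have "filterlim (\<lambda>k. fst (?P k i)) at_top sequentially"
      by (simp only: fb_states_eq_slot_states)
    moreover have "xbar C i < \<infinity>"
      by (rule xbar_less_PInf) (use C_bounded in auto)
    ultimately show ?case
      by (rule eventually_ereal_less_at_top)
  qed
qed

text \<open>Liveness needs only that the initial speeds are admissible: the brake safety of s, and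
  openness, convexity and symmetry of the obstacles, matter for collision avoidance only.\<close>
theorem theorem3:
  fixes vm ulow uhigh :: "'r::finite \<Rightarrow> real"
    and C :: "'r \<Rightarrow> 'r \<Rightarrow> (real \<times> real) set"
    and E :: "('r \<times> 'r) set"
    and s :: "'r \<Rightarrow> real \<times> real"
  assumes vm_pos: "\<forall>i. vm i > 0"
    and u_bounds: "\<forall>i. ulow i < 0 \<and> 0 < uhigh i"
    and C_open: "\<forall>i j. i \<noteq> j \<longrightarrow> open (C i j)"
    and C_bounded: "\<forall>i j. i \<noteq> j \<longrightarrow> bounded (C i j)"
    and C_convex: "\<forall>i j. i \<noteq> j \<longrightarrow> convex (C i j)"
    and C_sym: "\<forall>i j. i \<noteq> j \<longrightarrow> C j i = prod.swap ` C i j"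
    and G_acyclic: "acyclic E"
    and s_safe: "s \<in> brake_safe vm ulow C E"
  shows "\<exists>T > 0. \<forall>i. xbar C i <
           ereal (posn (fb_flow vm T s (ctrl_law vm ulow uhigh C E)) i)"
proof -
  let ?h = "ctrl_law vm ulow uhigh C E"
  let ?P = "fb_states vm ?h s"
  have "s \<in> state_space vm"
    using s_safe by (simp add: brake_safe_def)
  then have "\<forall>\<^sub>F k in sequentially. \<forall>i. xbar C i < ereal (fst (?P k i))"
    using vm_pos u_bounds C_bounded G_acyclic
    by (intro eventually_all_finite allI fb_states_pass_xbar) auto
  then obtain K where "\<forall>k \<ge> K. \<forall>i. xbar C i < ereal (fst (?P k i))"
    by (auto simp: eventually_sequentially)
  then have "\<forall>i. xbar C i < ereal (posn (fb_flow vm (real (Suc K)) s ?h) i)"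
    unfolding posn_fb_flow_of_nat by (metis le_SucI order_refl)
  then show ?thesis
    by (metis of_nat_0_less_iff zero_less_Suc)
qed

end
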